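(* Let $T$ and $S$ be maps (each with finitely many points of period dividing $n$ for every $n\ge1$), and let $T\times S$ be their Cartesian product. If any two of the sequences $\mathcal O_T$, $\mathcal O_S$, $\mathcal O_{T\times S}$ are multiplicative, then so is the third.
   Context: For a map $T:X\to X$, $\mathcal O_T(n)$ denotes the number of closed orbits of length $n$ under $T$ (sets $\{x,Tx,\dots,T^{n-1}x\}$ with $T^nx=x$ of cardinality exactly $n$), and $\mathcal F_T(n)=|\{x:T^nx=x\}|$. A sequence $f:\mathbb N\to\mathbb Z$ is multiplicative if $f(1)=1$ and $f(mn)=f(m)f(n)$ whenever $\gcd(m,n)=1$. $T\times S$ denotes the map $(x,y)\mapsto(Tx,Sy)$. *)

theory Defs
  imports Main
begin

definition closed_orbits :: "('a \<Rightarrow> 'a) \<Rightarrow> nat \<Rightarrow> 'a set set" where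
  "closed_orbits T n = {A. \<exists>x. (T ^^ n) x = x \<and> A = {(T ^^ i) x | i. i < n} \<and> card A = n}"

definition orbit_count :: "('a \<Rightarrow> 'a) \<Rightarrow> nat \<Rightarrow> int" where
  "orbit_count T n = int (card (closed_orbits T n))"

definition fixed_count :: "('a \<Rightarrow> 'a) \<Rightarrow> nat \<Rightarrow> int" where
  "fixed_count T n = int (card {x. (T ^^ n) x = x})"

definition multiplicative_seq :: "(nat \<Rightarrow> int) \<Rightarrow> bool" where
  "multiplicative_seq f \<longleftrightarrow> f 1 = 1 \<and>
     (\<forall>m n. 0 < m \<longrightarrow> 0 < n \<longrightarrow> coprime m n \<longrightarrow> f (m * n) = f m * f n)"

end

(*
  A point of T \<times> S has least period n exactly when its coordinates have least periods
  a and b with lcm a b = n.  Hence the numbers P(n) of points of least period n satisfy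
  P_{T\<times>S}(n) = \<Sum>_{lcm a b = n} P_T(a) P_S(b), an "lcm-convolution"; and P(n) = n O(n),
  because the closed orbits of length n partition the points of least period n into sets of
  size n, so O is multiplicative iff P is.

  For coprime m and k, the pairs with lcm m k are exactly the products of pairs with lcm m
  and pairs with lcm k, so the lcm-convolution of multiplicative sequences is multiplicative.
  Conversely, let f \<ge> 0 and the convolution of f and g be multiplicative.  By induction on
  m k, in the difference of the convolution at m k and the product of its values at m and k
  every term cancels except those with (b1, b2) = (m, k), which sum to
  (\<Sum>_{a | m} f a) (\<Sum>_{a | k} f a) (g(m k) - g(m) g(k)); the first two factors are at
  least f 1 = 1, so g(m k) = g(m) g(k).
*)

theory Submission
  imports Defs "HOL-Combinatorics.Orbits" "HOL-Combinatorics.Cycles"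
begin

definition lcm_pairs :: "nat \<Rightarrow> (nat \<times> nat) set" where
  "lcm_pairs n = {(a, b). lcm a b = n}"

definition lcm_convolution :: "(nat \<Rightarrow> int) \<Rightarrow> (nat \<Rightarrow> int) \<Rightarrow> nat \<Rightarrow> int" where
  "lcm_convolution f g n = (\<Sum>(a, b)\<in>lcm_pairs n. f a * g b)"

lemma lcm_pairs_1: "lcm_pairs 1 = {(1, 1)}"
  by (auto simp: lcm_pairs_def)

lemma lcm_pairsD:
  assumes "(a, b) \<in> lcm_pairs n" "0 < n"
  shows "a dvd n" "b dvd n" "0 < a" "0 < b"
  using assms by (auto simp: lcm_pairs_def intro: Nat.gr0I)

lemma finite_lcm_pairs: "0 < n \<Longrightarrow> finite (lcm_pairs n)"
  by (rule finite_subset[of _ "{d. d dvd n} \<times> {d. d dvd n}"])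
     (auto dest: lcm_pairsD)

lemma lcm_convolution_commute: "lcm_convolution f g = lcm_convolution g f"
  unfolding lcm_convolution_def
  by (intro ext sum.reindex_bij_witness[of _ prod.swap prod.swap])
     (auto simp: lcm_pairs_def lcm.commute)

lemma dvd_factors_eq_if_mult_eq:
  fixes x y m k :: nat
  assumes "x dvd m" "y dvd k" "x * y = m * k" "0 < m" "0 < k"
  shows "x = m \<and> y = k"
proof -
  obtain c d where "m = x * c" "k = y * d" using assms(1,2) by blast
  with assms(3-5) have "c * d = 1" by (simp add: ac_simps)
  with \<open>m = x * c\<close> \<open>k = y * d\<close> show ?thesis by simp
qed

lemma lcm_mult_coprime_divisors:
  fixes a1 b1 a2 b2 m k :: nat
  assumes "a1 dvd m" "b1 dvd m" "a2 dvd k" "b2 dvd k" "coprime m k"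
  shows "lcm (a1 * a2) (b1 * b2) = lcm a1 b1 * lcm a2 b2"
proof -
  have "coprime a1 a2" "coprime b1 b2" "coprime (lcm a1 b1) (lcm a2 b2)"
    using assms coprime_divisors lcm_least by blast+
  then have "a1 * a2 = lcm a1 a2" "b1 * b2 = lcm b1 b2"
    "lcm a1 b1 * lcm a2 b2 = lcm (lcm a1 b1) (lcm a2 b2)"
    by (simp_all add: lcm_coprime)
  then show ?thesis by (simp add: ac_simps)
qed

lemma eq_if_mult_eq_coprime_divisors:
  fixes a1 a2 a1' a2' m k :: nat
  assumes "a1 * a2 = a1' * a2'" "a1 dvd m" "a1' dvd m" "a2 dvd k" "a2' dvd k" "coprime m k"
  shows "a1 = a1'"
proof (rule dvd_antisym)
  have "coprime a1 a2'" "coprime a1' a2"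
    using assms coprime_divisors by blast+
  then show "a1 dvd a1'" "a1' dvd a1"
    using assms(1) by (metis coprime_dvd_mult_left_iff dvd_triv_left)+
qed

lemma bij_betw_lcm_pairs_mult:
  assumes "coprime m k" "0 < m" "0 < k"
  shows "bij_betw (\<lambda>((a1, b1), (a2, b2)). (a1 * a2, b1 * b2))
           (lcm_pairs m \<times> lcm_pairs k) (lcm_pairs (m * k))"
proof (rule bij_betw_imageI)
  show "inj_on (\<lambda>((a1, b1), (a2, b2)). (a1 * a2, b1 * b2)) (lcm_pairs m \<times> lcm_pairs k)"
  proof (rule inj_onI, clarify)
    fix a1 b1 a2 b2 a1' b1' a2' b2'
    assume "(a1, b1) \<in> lcm_pairs m" "(a2, b2) \<in> lcm_pairs k"
      "(a1', b1') \<in> lcm_pairs m" "(a2', b2') \<in> lcm_pairs k"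
      "a1 * a2 = a1' * a2'" "b1 * b2 = b1' * b2'"
    with assms show "(a1, b1) = (a1', b1') \<and> (a2, b2) = (a2', b2')"
      using eq_if_mult_eq_coprime_divisors[of a1 a2 a1' a2' m k]
        eq_if_mult_eq_coprime_divisors[of b1 b2 b1' b2' m k]
        eq_if_mult_eq_coprime_divisors[of a2 a1 a2' a1' k m]
        eq_if_mult_eq_coprime_divisors[of b2 b1 b2' b1' k m]
      by (auto dest: lcm_pairsD simp: ac_simps coprime_commute)
  qed
  show "(\<lambda>((a1, b1), (a2, b2)). (a1 * a2, b1 * b2)) ` (lcm_pairs m \<times> lcm_pairs k) = lcm_pairs (m * k)"
  proof (intro equalityI subsetI)
    fix p assume "p \<in> (\<lambda>((a1, b1), (a2, b2)). (a1 * a2, b1 * b2)) ` (lcm_pairs m \<times> lcm_pairs k)"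
    then obtain a1 b1 a2 b2 where p: "p = (a1 * a2, b1 * b2)"
      and m: "(a1, b1) \<in> lcm_pairs m" and k: "(a2, b2) \<in> lcm_pairs k"
      by auto
    have "lcm (a1 * a2) (b1 * b2) = lcm a1 b1 * lcm a2 b2"
      using lcm_pairsD[OF m] lcm_pairsD[OF k] assms by (intro lcm_mult_coprime_divisors)
    with m k show "p \<in> lcm_pairs (m * k)"
      by (simp add: p lcm_pairs_def)
  next
    fix p assume p: "p \<in> lcm_pairs (m * k)"
    obtain a b where "p = (a, b)" by (cases p)
    with p have ab: "lcm a b = m * k" by (simp add: lcm_pairs_def)
    obtain a1 a2 where a: "a = a1 * a2" "a1 dvd m" "a2 dvd k"
      using division_decomp[of a m k] ab by (metis dvd_lcm1)
    obtain b1 b2 where b: "b = b1 * b2" "b1 dvd m" "b2 dvd k"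
      using division_decomp[of b m k] ab by (metis dvd_lcm2)
    have "lcm a1 b1 * lcm a2 b2 = m * k"
      using ab a b lcm_mult_coprime_divisors assms(1) by metis
    then have "lcm a1 b1 = m \<and> lcm a2 b2 = k"
      using a b assms by (intro dvd_factors_eq_if_mult_eq) simp_all
    then show "p \<in> (\<lambda>((a1, b1), (a2, b2)). (a1 * a2, b1 * b2)) ` (lcm_pairs m \<times> lcm_pairs k)"
      using \<open>p = (a, b)\<close> a b by (force simp: lcm_pairs_def)
  qed
qed

lemma lcm_convolution_mult:
  assumes "coprime m k" "0 < m" "0 < k"
  shows "lcm_convolution f g (m * k) =
    (\<Sum>(a1, b1)\<in>lcm_pairs m. \<Sum>(a2, b2)\<in>lcm_pairs k. f (a1 * a2) * g (b1 * b2))"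
proof -
  let ?h = "\<lambda>((a1, b1), (a2, b2)). (a1 * a2, b1 * b2)"
  have "lcm_convolution f g (m * k) =
      (\<Sum>p\<in>lcm_pairs m \<times> lcm_pairs k. (\<lambda>(a, b). f a * g b) (?h p))"
    unfolding lcm_convolution_def
    by (rule sum.reindex_bij_betw[OF bij_betw_lcm_pairs_mult[OF assms], symmetric])
  also have "\<dots> = (\<Sum>(a1, b1)\<in>lcm_pairs m. \<Sum>(a2, b2)\<in>lcm_pairs k. f (a1 * a2) * g (b1 * b2))"
    by (simp add: sum.cartesian_product split_def)
  finally show ?thesis .
qed

lemma multiplicative_seq_mult_coprime_divisors:
  assumes "multiplicative_seq f" "coprime m k" "0 < m" "0 < k" "a dvd m" "b dvd k"
  shows "f (a * b) = f a * f b"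
  using assms coprime_divisors[OF assms(5,6,2)] dvd_pos_nat[of m a] dvd_pos_nat[of k b]
  unfolding multiplicative_seq_def by blast

lemma lcm_convolution_mult_defect:
  assumes f: "multiplicative_seq f" and mk: "coprime m k" "0 < m" "0 < k"
  shows "lcm_convolution f g (m * k) - lcm_convolution f g m * lcm_convolution f g k =
    (\<Sum>(a1, b1)\<in>lcm_pairs m. \<Sum>(a2, b2)\<in>lcm_pairs k.
       f a1 * f a2 * (g (b1 * b2) - g b1 * g b2))"
proof -
  have f_mult: "f (a1 * a2) = f a1 * f a2"
    if "(a1, b1) \<in> lcm_pairs m" "(a2, b2) \<in> lcm_pairs k" for a1 b1 a2 b2
    using lcm_pairsD[OF that(1)] lcm_pairsD[OF that(2)] mk
    by (intro multiplicative_seq_mult_coprime_divisors[OF f mk(1)])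
  have "lcm_convolution f g m * lcm_convolution f g k =
      (\<Sum>(a1, b1)\<in>lcm_pairs m. \<Sum>(a2, b2)\<in>lcm_pairs k. f a1 * g b1 * (f a2 * g b2))"
    unfolding lcm_convolution_def by (simp add: sum_product split_def)
  then have "lcm_convolution f g (m * k) - lcm_convolution f g m * lcm_convolution f g k =
      (\<Sum>(a1, b1)\<in>lcm_pairs m. \<Sum>(a2, b2)\<in>lcm_pairs k.
         f (a1 * a2) * g (b1 * b2) - f a1 * g b1 * (f a2 * g b2))"
    unfolding lcm_convolution_mult[OF mk] by (simp add: sum_subtractf split_def)
  also have "\<dots> = (\<Sum>(a1, b1)\<in>lcm_pairs m. \<Sum>(a2, b2)\<in>lcm_pairs k.
       f a1 * f a2 * (g (b1 * b2) - g b1 * g b2))"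
    by (auto intro!: sum.cong simp: f_mult algebra_simps)
  finally show ?thesis .
qed

lemma lcm_convolution_1: "lcm_convolution f g 1 = f 1 * g 1"
  unfolding lcm_convolution_def lcm_pairs_1 by simp

lemma multiplicative_lcm_convolution:
  assumes f: "multiplicative_seq f" and g: "multiplicative_seq g"
  shows "multiplicative_seq (lcm_convolution f g)"
  unfolding multiplicative_seq_def
proof (intro conjI allI impI)
  show "lcm_convolution f g 1 = 1"
    using f g lcm_convolution_1[of f g] by (simp add: multiplicative_seq_def)
  fix m k :: nat assume mk: "0 < m" "0 < k" "coprime m k"
  have "g (b1 * b2) = g b1 * g b2"
    if "(a1, b1) \<in> lcm_pairs m" "(a2, b2) \<in> lcm_pairs k" for a1 b1 a2 b2
    using lcm_pairsD[OF that(1)] lcm_pairsD[OF that(2)] mk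
    by (intro multiplicative_seq_mult_coprime_divisors[OF g mk(3)])
  then have "lcm_convolution f g (m * k) - lcm_convolution f g m * lcm_convolution f g k = 0"
    unfolding lcm_convolution_mult_defect[OF f mk(3,1,2)] by (auto intro!: sum.neutral)
  then show "lcm_convolution f g (m * k) = lcm_convolution f g m * lcm_convolution f g k"
    by simp
qed

lemma sum_lcm_pairs_snd_eq:
  assumes "0 < m"
  shows "(\<Sum>(a, b)\<in>lcm_pairs m. if b = m then h a else 0) = (\<Sum>a | a dvd m. h a)"
proof -
  have "{p \<in> lcm_pairs m. snd p = m} = (\<lambda>a. (a, m)) ` {a. a dvd m}"
    by (auto simp: lcm_pairs_def)
  then have "(\<Sum>(a, b)\<in>lcm_pairs m. if b = m then h a else 0) = (\<Sum>a\<in>{a. a dvd m}. h a)"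
    using assms by (simp add: sum.inter_filter[symmetric] finite_lcm_pairs split_def
      sum.reindex inj_on_def)
  then show ?thesis by simp
qed

lemma lcm_convolution_mult_defect_top:
  assumes f: "multiplicative_seq f" and mk: "coprime m k" "0 < m" "0 < k"
    and g: "\<And>b1 b2. b1 dvd m \<Longrightarrow> b2 dvd k \<Longrightarrow> b1 * b2 < m * k \<Longrightarrow> g (b1 * b2) = g b1 * g b2"
  shows "lcm_convolution f g (m * k) - lcm_convolution f g m * lcm_convolution f g k =
    (\<Sum>a | a dvd m. f a) * (\<Sum>a | a dvd k. f a) * (g (m * k) - g m * g k)"
proof -
  let ?D = "g (m * k) - g m * g k"
  have term_eq: "f a1 * f a2 * (g (b1 * b2) - g b1 * g b2) =
      (if b1 = m then f a1 else 0) * (if b2 = k then f a2 else 0) * ?D"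
    if "(a1, b1) \<in> lcm_pairs m" "(a2, b2) \<in> lcm_pairs k" for a1 b1 a2 b2
  proof (cases "b1 = m \<and> b2 = k")
    case False
    have b: "b1 dvd m" "b2 dvd k"
      using lcm_pairsD[OF that(1)] lcm_pairsD[OF that(2)] mk by auto
    then have "b1 * b2 \<le> m * k"
      using mk by (simp add: dvd_imp_le mult_le_mono)
    moreover have "b1 * b2 \<noteq> m * k"
      using False b mk dvd_factors_eq_if_mult_eq by blast
    ultimately have "g (b1 * b2) = g b1 * g b2"
      using b by (intro g) simp_all
    with False show ?thesis by auto
  qed simp
  have "lcm_convolution f g (m * k) - lcm_convolution f g m * lcm_convolution f g k =
      (\<Sum>(a1, b1)\<in>lcm_pairs m. \<Sum>(a2, b2)\<in>lcm_pairs k.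
        (if b1 = m then f a1 else 0) * (if b2 = k then f a2 else 0) * ?D)"
    unfolding lcm_convolution_mult_defect[OF f mk]
    by (auto intro!: sum.cong simp: term_eq)
  also have "\<dots> = (\<Sum>(a, b)\<in>lcm_pairs m. if b = m then f a else 0) *
      (\<Sum>(a, b)\<in>lcm_pairs k. if b = k then f a else 0) * ?D"
    unfolding sum_product by (simp add: sum_distrib_right split_def)
  finally show ?thesis
    using mk by (simp add: sum_lcm_pairs_snd_eq)
qed

lemma multiplicative_lcm_convolution_cancel:
  assumes f: "multiplicative_seq f" and f_nonneg: "\<And>n. 0 \<le> f n"
    and fg: "multiplicative_seq (lcm_convolution f g)"
  shows "multiplicative_seq g"
proof -
  have f1: "f 1 = 1" using f by (simp add: multiplicative_seq_def)
  have g1: "g 1 = 1" using fg f1 lcm_convolution_1[of f g] by (simp add: multiplicative_seq_def)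
  have divisor_sum_pos: "0 < (\<Sum>a | a dvd n. f a)" if "0 < n" for n
  proof -
    have "f 1 \<le> (\<Sum>a | a dvd n. f a)"
      using that by (intro member_le_sum) (simp_all add: f_nonneg)
    with f1 show ?thesis by simp
  qed
  have "g (m * k) = g m * g k" if "0 < m" "0 < k" "coprime m k" for m k
    using that
  proof (induction "m * k" arbitrary: m k rule: less_induct)
    case less
    have "g (b1 * b2) = g b1 * g b2"
      if "b1 dvd m" "b2 dvd k" "b1 * b2 < m * k" for b1 b2
      using that less.prems dvd_pos_nat[of m b1] dvd_pos_nat[of k b2]
        coprime_divisors[of b1 m b2 k]
      by (intro less.hyps) simp_all
    then have "(\<Sum>a | a dvd m. f a) * (\<Sum>a | a dvd k. f a) * (g (m * k) - g m * g k) = 0"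
      using fg less.prems
      by (simp add: lcm_convolution_mult_defect_top[OF f less.prems(3,1,2), symmetric]
        multiplicative_seq_def)
    then show ?case
      using divisor_sum_pos[of m] divisor_sum_pos[of k] less.prems by simp
  qed
  with g1 show ?thesis by (simp add: multiplicative_seq_def)
qed

lemma funpow_map_prod:
  fixes f :: "'a \<Rightarrow> 'a" and g :: "'b \<Rightarrow> 'b"
  shows "(map_prod f g ^^ n) (x, y) = ((f ^^ n) x, (g ^^ n) y)"
  by (induction n) auto

lemma finite_fixed_points_map_prod:
  fixes f :: "'a \<Rightarrow> 'a" and g :: "'b \<Rightarrow> 'b"
  assumes "finite {x. (f ^^ n) x = x}" "finite {y. (g ^^ n) y = y}"
  shows "finite {z. (map_prod f g ^^ n) z = z}"
proof -
  have "{z. (map_prod f g ^^ n) z = z} = {x. (f ^^ n) x = x} \<times> {y. (g ^^ n) y = y}"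
    by (auto simp: funpow_map_prod)
  with assms show ?thesis by simp
qed

lemma funpow_eq_self_iff_least_power_dvd:
  assumes "(f ^^ n) x = x" "0 < n"
  shows "(f ^^ k) x = x \<longleftrightarrow> least_power f x dvd k"
proof
  assume "least_power f x dvd k"
  then show "(f ^^ k) x = x"
    using funpow_mod_eq[OF least_powerI(1)[OF assms], of k] by simp
qed (rule least_power_minimal)

lemma least_power_map_prod:
  assumes "(f ^^ n) x = x" "(g ^^ n) y = y" "0 < n"
  shows "least_power (map_prod f g) (x, y) = lcm (least_power f x) (least_power g y)"
proof -
  have iff: "(map_prod f g ^^ k) (x, y) = (x, y) \<longleftrightarrow> lcm (least_power f x) (least_power g y) dvd k"
    for k
    using funpow_eq_self_iff_least_power_dvd[OF assms(1,3)]
      funpow_eq_self_iff_least_power_dvd[OF assms(2,3)]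
    by (simp add: funpow_map_prod)
  have "(map_prod f g ^^ n) (x, y) = (x, y)"
    using assms by (simp add: funpow_map_prod)
  from least_powerI(1)[OF this assms(3)] show ?thesis
    using iff least_power_minimal by (metis dvd_antisym dvd_refl)
qed

text \<open>Only meaningful for \<open>0 < n\<close>: for a point without a positive period,
  \<open>least_power f x\<close> is an unspecified number.\<close>

definition least_period_points :: "('a \<Rightarrow> 'a) \<Rightarrow> nat \<Rightarrow> 'a set" where
  "least_period_points f n = {x. (f ^^ n) x = x \<and> least_power f x = n}"

definition least_period_count :: "('a \<Rightarrow> 'a) \<Rightarrow> nat \<Rightarrow> int" where
  "least_period_count f n = int (card (least_period_points f n))"

lemma finite_least_period_points:
  "finite {x. (f ^^ n) x = x} \<Longrightarrow> finite (least_period_points f n)"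
  by (rule finite_subset[rotated]) (auto simp: least_period_points_def)

lemma least_period_points_map_prod:
  assumes "0 < n"
  shows "least_period_points (map_prod f g) n =
    (\<Union>(a, b)\<in>lcm_pairs n. least_period_points f a \<times> least_period_points g b)"
proof (intro equalityI subsetI)
  fix z assume z: "z \<in> least_period_points (map_prod f g) n"
  obtain x y where "z = (x, y)" by (cases z)
  with z have periodic: "(f ^^ n) x = x" "(g ^^ n) y = y"
    and "least_power (map_prod f g) (x, y) = n"
    by (auto simp: least_period_points_def funpow_map_prod)
  then have "lcm (least_power f x) (least_power g y) = n"
    using least_power_map_prod[OF periodic assms] by simp
  moreover have "x \<in> least_period_points f (least_power f x)"
    "y \<in> least_period_points g (least_power g y)"
    using least_powerI(1)[OF periodic(1) assms] least_powerI(1)[OF periodic(2) assms]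
    by (simp_all add: least_period_points_def)
  ultimately show "z \<in> (\<Union>(a, b)\<in>lcm_pairs n. least_period_points f a \<times> least_period_points g b)"
    using \<open>z = (x, y)\<close> by (auto simp: lcm_pairs_def)
next
  fix z assume "z \<in> (\<Union>(a, b)\<in>lcm_pairs n. least_period_points f a \<times> least_period_points g b)"
  then obtain a b x y where ab: "(a, b) \<in> lcm_pairs n" and z: "z = (x, y)"
    and x: "(f ^^ a) x = x" "least_power f x = a" and y: "(g ^^ b) y = y" "least_power g y = b"
    by (auto simp: least_period_points_def)
  have "0 < a" "0 < b" "a dvd n" "b dvd n"
    using lcm_pairsD[OF ab assms] by simp_all
  then have "(f ^^ n) x = x" "(g ^^ n) y = y"
    using funpow_eq_self_iff_least_power_dvd[OF x(1)] funpow_eq_self_iff_least_power_dvd[OF y(1)] x y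
    by simp_all
  with ab x y assms show "z \<in> least_period_points (map_prod f g) n"
    by (simp add: z least_period_points_def least_power_map_prod funpow_map_prod lcm_pairs_def)
qed

lemma least_period_count_map_prod:
  assumes "\<And>n. 0 < n \<Longrightarrow> finite {x. (f ^^ n) x = x}"
    and "\<And>n. 0 < n \<Longrightarrow> finite {y. (g ^^ n) y = y}" and "0 < n"
  shows "least_period_count (map_prod f g) n =
    lcm_convolution (least_period_count f) (least_period_count g) n"
proof -
  have "finite (least_period_points f a \<times> least_period_points g b)"
    if "(a, b) \<in> lcm_pairs n" for a b
    using lcm_pairsD[OF that assms(3)]
    by (intro finite_cartesian_product finite_least_period_points assms(1,2))
  then have "card (least_period_points (map_prod f g) n) =
      (\<Sum>(a, b)\<in>lcm_pairs n. card (least_period_points f a \<times> least_period_points g b))"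
    unfolding least_period_points_map_prod[OF assms(3)]
    by (subst card_UN_disjoint)
       (auto simp: split_def finite_lcm_pairs assms(3), auto simp: least_period_points_def)
  then show ?thesis
    by (simp add: least_period_count_def lcm_convolution_def card_cartesian_product split_def)
qed

lemma self_in_orbit_if_periodic:
  assumes "(f ^^ n) x = x" "0 < n"
  shows "x \<in> orbit f x"
proof -
  have "x = (f ^^ n) x \<and> 0 < n"
    using assms by simp
  then show ?thesis
    unfolding orbit_altdef by blast
qed

lemma card_orbit:
  assumes "(f ^^ n) x = x" "0 < n"
  shows "card (orbit f x) = least_power f x"
proof -
  have x: "x \<in> orbit f x"
    using assms by (rule self_in_orbit_if_periodic)
  have "funpow_dist1 f x x = least_power f x"
  proof (rule antisym)
    show "funpow_dist1 f x x \<le> least_power f x"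
      using least_powerI[OF assms] x by (rule funpow_dist1_le_self)
    show "least_power f x \<le> funpow_dist1 f x x"
      using funpow_dist1_prop[OF x] by (rule least_power_le) simp
  qed
  then show ?thesis
    using orbit_conv_funpow_dist1[OF x] inj_on_funpow_dist1[OF x] by (simp add: card_image)
qed

lemma orbit_eq_orbit_if_mem:
  assumes "x \<in> orbit f x" "y \<in> orbit f x"
  shows "orbit f y = orbit f x"
proof (intro equalityI subsetI)
  fix z assume "z \<in> orbit f y"
  then show "z \<in> orbit f x"
    using assms(2) by (rule orbit_trans)
next
  fix z assume "z \<in> orbit f x"
  moreover have "x \<in> orbit f y"
    using assms by (rule orbit_swap)
  ultimately show "z \<in> orbit f y"
    by (rule orbit_trans)
qed

lemma least_period_points_iff_card_orbit:
  assumes "0 < n"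
  shows "x \<in> least_period_points f n \<longleftrightarrow> x \<in> orbit f x \<and> card (orbit f x) = n"
proof
  assume "x \<in> least_period_points f n"
  then have "(f ^^ n) x = x" "least_power f x = n"
    by (simp_all add: least_period_points_def)
  with assms show "x \<in> orbit f x \<and> card (orbit f x) = n"
    by (simp add: self_in_orbit_if_periodic card_orbit)
next
  assume x: "x \<in> orbit f x \<and> card (orbit f x) = n"
  then have "x \<in> {(f ^^ m) x | m. 0 < m}"
    by (simp add: orbit_altdef)
  then obtain m where "x = (f ^^ m) x" "0 < m"
    by blast
  then have periodic: "(f ^^ m) x = x" "0 < m"
    by simp_all
  have "least_power f x = n"
    using x card_orbit[OF periodic] by simp
  moreover have "(f ^^ least_power f x) x = x"
    by (rule least_powerI(1)[OF periodic])
  ultimately show "x \<in> least_period_points f n"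
    by (simp add: least_period_points_def)
qed

lemma closed_orbits_eq:
  assumes "0 < n"
  shows "closed_orbits f n = orbit f ` least_period_points f n"
proof (intro equalityI subsetI)
  fix A assume "A \<in> closed_orbits f n"
  then obtain x where x: "(f ^^ n) x = x" and A: "A = {(f ^^ i) x | i. i < n}" "card A = n"
    unfolding closed_orbits_def by blast
  have "A = orbit f x"
    using A orbit_altdef_bounded[OF x assms] by simp
  moreover have "x \<in> orbit f x"
    using x assms by (rule self_in_orbit_if_periodic)
  ultimately have "x \<in> least_period_points f n"
    using A(2) by (simp add: least_period_points_iff_card_orbit[OF assms])
  with \<open>A = orbit f x\<close> show "A \<in> orbit f ` least_period_points f n"
    by blast
next
  fix A assume "A \<in> orbit f ` least_period_points f n"
  then obtain x where x: "x \<in> least_period_points f n" and A: "A = orbit f x"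
    by blast
  have "(f ^^ n) x = x"
    using x by (simp add: least_period_points_def)
  moreover have "A = {(f ^^ i) x | i. i < n}"
    using orbit_altdef_bounded[OF \<open>(f ^^ n) x = x\<close> assms] A by simp
  moreover have "card A = n"
    using x A by (simp add: least_period_points_iff_card_orbit[OF assms])
  ultimately show "A \<in> closed_orbits f n"
    unfolding closed_orbits_def by blast
qed

lemma orbit_subset_least_period_points:
  assumes "x \<in> least_period_points f n" "0 < n"
  shows "orbit f x \<subseteq> least_period_points f n"
proof
  fix y assume y: "y \<in> orbit f x"
  have x: "x \<in> orbit f x" "card (orbit f x) = n"
    using assms by (simp_all add: least_period_points_iff_card_orbit)
  have "y \<in> orbit f y"
    using x(1) y by (rule self_in_orbit_trans)
  moreover have "orbit f y = orbit f x"
    using x(1) y by (rule orbit_eq_orbit_if_mem)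
  ultimately show "y \<in> least_period_points f n"
    using x(2) assms(2) by (simp add: least_period_points_iff_card_orbit)
qed

lemma card_least_period_points:
  assumes "finite {x. (f ^^ n) x = x}" "0 < n"
  shows "card (least_period_points f n) = n * card (closed_orbits f n)"
proof -
  let ?P = "least_period_points f n"
  have P_iff: "x \<in> ?P \<longleftrightarrow> x \<in> orbit f x \<and> card (orbit f x) = n" for x
    using least_period_points_iff_card_orbit[OF assms(2)] .
  have self_mem: "x \<in> orbit f x" if "x \<in> ?P" for x
    using that by (simp add: P_iff)
  have union: "\<Union> (orbit f ` ?P) = ?P"
  proof
    show "\<Union> (orbit f ` ?P) \<subseteq> ?P"
      using orbit_subset_least_period_points[OF _ assms(2)] by (rule UN_least)
    show "?P \<subseteq> \<Union> (orbit f ` ?P)"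
      using self_mem by blast
  qed
  have "n * card (orbit f ` ?P) = card (\<Union> (orbit f ` ?P))"
  proof (rule card_partition)
    show "finite (orbit f ` ?P)" "finite (\<Union> (orbit f ` ?P))"
      using finite_least_period_points[OF assms(1)] union by simp_all
    show "card c = n" if "c \<in> orbit f ` ?P" for c
      using that by (auto simp: P_iff)
    show "c1 \<inter> c2 = {}"
      if c1: "c1 \<in> orbit f ` ?P" and c2: "c2 \<in> orbit f ` ?P" and "c1 \<noteq> c2" for c1 c2
    proof (rule ccontr)
      assume "c1 \<inter> c2 \<noteq> {}"
      then obtain z where z: "z \<in> c1" "z \<in> c2"
        by blast
      obtain x1 x2 where x: "x1 \<in> ?P" "x2 \<in> ?P" and c: "c1 = orbit f x1" "c2 = orbit f x2"
        using c1 c2 by blast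
      have "orbit f z = c1"
        using self_mem[OF x(1)] z(1) unfolding c by (rule orbit_eq_orbit_if_mem)
      moreover have "orbit f z = c2"
        using self_mem[OF x(2)] z(2) unfolding c by (rule orbit_eq_orbit_if_mem)
      ultimately show False
        using \<open>c1 \<noteq> c2\<close> by simp
    qed
  qed
  then show ?thesis
    unfolding closed_orbits_eq[OF assms(2)] using union by simp
qed

lemma multiplicative_seq_cong:
  assumes "\<And>n. 0 < n \<Longrightarrow> F n = G n"
  shows "multiplicative_seq F \<longleftrightarrow> multiplicative_seq G"
  using assms by (simp add: multiplicative_seq_def)

lemma multiplicative_seq_iff_scaled:
  assumes "\<And>n. 0 < n \<Longrightarrow> G n = int n * F n"
  shows "multiplicative_seq F \<longleftrightarrow> multiplicative_seq G"
proof -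
  have "G (m * n) = G m * G n \<longleftrightarrow> F (m * n) = F m * F n" if "0 < m" "0 < n" for m n
    using that by (simp add: assms ac_simps)
  moreover have "G 1 = F 1"
    using assms[of 1] by simp
  ultimately show ?thesis
    unfolding multiplicative_seq_def by auto
qed

lemma multiplicative_orbit_count_iff:
  assumes "\<And>n. 0 < n \<Longrightarrow> finite {x. (f ^^ n) x = x}"
  shows "multiplicative_seq (orbit_count f) \<longleftrightarrow> multiplicative_seq (least_period_count f)"
  by (rule multiplicative_seq_iff_scaled)
     (simp add: least_period_count_def orbit_count_def card_least_period_points assms)

theorem lemma3p1:
  fixes T :: "'a \<Rightarrow> 'a" and S :: "'b \<Rightarrow> 'b"
  assumes finT: "\<And>n. n \<ge> 1 \<Longrightarrow> finite {x. (T ^^ n) x = x}"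
    and finS: "\<And>n. n \<ge> 1 \<Longrightarrow> finite {y. (S ^^ n) y = y}"
  shows "(multiplicative_seq (orbit_count T) \<and> multiplicative_seq (orbit_count S)
            \<longrightarrow> multiplicative_seq (orbit_count (map_prod T S)))
       \<and> (multiplicative_seq (orbit_count T) \<and> multiplicative_seq (orbit_count (map_prod T S))
            \<longrightarrow> multiplicative_seq (orbit_count S))
       \<and> (multiplicative_seq (orbit_count S) \<and> multiplicative_seq (orbit_count (map_prod T S))
            \<longrightarrow> multiplicative_seq (orbit_count T))"
proof -
  have fin_T: "finite {x. (T ^^ n) x = x}" and fin_S: "finite {y. (S ^^ n) y = y}"
    if "0 < n" for n
    using that finT finS by simp_all
  have fin_TS: "finite {z. (map_prod T S ^^ n) z = z}" if "0 < n" for n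
    using fin_T[OF that] fin_S[OF that] by (rule finite_fixed_points_map_prod)
  let ?P = least_period_count
  have product: "multiplicative_seq (?P (map_prod T S)) \<longleftrightarrow>
      multiplicative_seq (lcm_convolution (?P T) (?P S))"
    by (rule multiplicative_seq_cong) (rule least_period_count_map_prod[OF fin_T fin_S])
  have nonneg: "0 \<le> ?P T n" "0 \<le> ?P S n" for n
    by (simp_all add: least_period_count_def)
  have iff_T: "multiplicative_seq (orbit_count T) \<longleftrightarrow> multiplicative_seq (?P T)"
    by (rule multiplicative_orbit_count_iff[OF fin_T])
  have iff_S: "multiplicative_seq (orbit_count S) \<longleftrightarrow> multiplicative_seq (?P S)"
    by (rule multiplicative_orbit_count_iff[OF fin_S])
  have iff_TS: "multiplicative_seq (orbit_count (map_prod T S)) \<longleftrightarrow> multiplicative_seq (?P (map_prod T S))"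
    by (rule multiplicative_orbit_count_iff[OF fin_TS])
  have swap: "lcm_convolution (?P S) (?P T) = lcm_convolution (?P T) (?P S)"
    by (rule lcm_convolution_commute)
  show ?thesis
    unfolding iff_T iff_S iff_TS product
    using multiplicative_lcm_convolution[of "?P T" "?P S"]
      multiplicative_lcm_convolution_cancel[of "?P T" "?P S", OF _ nonneg(1)]
      multiplicative_lcm_convolution_cancel[of "?P S" "?P T", OF _ nonneg(2)]
    unfolding swap by blast
qed

end
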